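(* Let $\sigma\ge 2$, $k\ge 1$, let $U$ be any rotation of a $\sigma$-ary de Bruijn cycle of order $k$, and let $w_{\mathrm{lin}}=U\,U[0..k-2]$. Then the number $r$ of runs of $\operatorname{BWT}(w_{\mathrm{lin}}\$)$ satisfies $r\ge \sigma^{k-1}(\sigma-1)+1$.
   Context: A $\sigma$-ary de Bruijn cycle of order $k$ is a cyclic word of length $\sigma^k$ over an ordered alphabet $\Sigma$ of size $\sigma$ in which every word of $\Sigma^k$ occurs exactly once as a cyclic length-$k$ window. Strings are $0$-indexed. $\$\notin\Sigma$ is an end-marker smaller than all letters, appended once. $\operatorname{BWT}(v)$ is the last column of the matrix whose rows are the cyclic rotations of $v$ sorted lexicographically; a run is a maximal block of one repeated symbol. *)

theory Defs
  imports Main "HOL-Library.List_Lexorder" "HOL-Library.Option_ord"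
begin

definition cyc_window :: "'a list \<Rightarrow> nat \<Rightarrow> nat \<Rightarrow> 'a list" where
  "cyc_window u i k = map (\<lambda>j. u ! ((i + j) mod length u)) [0..<k]"

definition de_bruijn :: "'a set \<Rightarrow> nat \<Rightarrow> 'a list \<Rightarrow> bool" where
  "de_bruijn S k u \<longleftrightarrow> set u \<subseteq> S \<and> length u = card S ^ k \<and>
     (\<forall>x. length x = k \<and> set x \<subseteq> S \<longrightarrow> (\<exists>!i. i < length u \<and> cyc_window u i k = x))"

definition bwt :: "'a::linorder list \<Rightarrow> 'a list" where
  "bwt v = map last (sort (map (\<lambda>i. rotate i v) [0..<length v]))"

definition runs :: "'a list \<Rightarrow> nat" where
  "runs xs = length (remdups_adj xs)"

text \<open>Append the end-marker: letters become Some a, the marker is None < Some a.\<close>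
definition with_end :: "'a list \<Rightarrow> 'a option list" where
  "with_end w = map Some w @ [None]"

end

theory Submission
  imports Defs
begin

(* Rotations sharing a length-(k-1) prefix
   (a context) form a contiguous block, and inside a block the BWT contains every letter
   that cyclically precedes that context; hence runs >= #(context, letter) pairs -
   #contexts + 1.  Linearizing a de Bruijn cycle U keeps every cyclic k-window of U as the
   last letter plus the first k-1 letters of some rotation of v, so each of the sigma^(k-1)
   contexts over the alphabet comes with all sigma preceding letters. *)

definition rotations :: "'b list \<Rightarrow> 'b list set" where
  "rotations v = (\<lambda>i. rotate i v) ` {..<length v}"

(* last r is the letter that the row r of the sorted rotation matrix contributes to the BWT *)
definition context_pairs :: "nat \<Rightarrow> 'b list \<Rightarrow> ('b list \<times> 'b) set" where
  "context_pairs n v = (\<lambda>r. (take n r, last r)) ` rotations v"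

lemma finite_context_pairs: "finite (context_pairs n v)"
  by (simp add: context_pairs_def rotations_def)

lemma Domain_context_pairs: "Domain (context_pairs n v) = take n ` rotations v"
  by (simp add: context_pairs_def Domain_fst image_image)

lemma runs_Cons_Cons: "runs (x # y # xs) = runs (y # xs) + (if x = y then 0 else 1)"
  by (simp add: runs_def)

lemma card_set_le_runs: "card (set xs) \<le> runs xs"
  unfolding runs_def by (metis card_length remdups_adj_set)

lemma runs_sorted: "sorted xs \<Longrightarrow> runs xs = card (set xs)"
proof (induction xs rule: induct_list012)
  case (3 x y zs)
  have "x \<le> y" "sorted (y # zs)" "\<forall>z\<in>set zs. y \<le> z" using "3.prems" by auto
  then have "x \<noteq> y \<Longrightarrow> x \<notin> set (y # zs)" by auto
  then show ?case using "3.IH"(2)[OF \<open>sorted (y # zs)\<close>] by (auto simp: runs_Cons_Cons)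
qed (simp_all add: runs_def)

lemma runs_map_pair_le:
  "xs \<noteq> [] \<Longrightarrow> runs (map (\<lambda>x. (f x, g x)) xs) + 1 \<le> runs (map f xs) + runs (map g xs)"
  by (induction xs rule: induct_list012) (auto simp: runs_Cons_Cons runs_def)

lemma take_lexorder_mono: "xs \<le> ys \<Longrightarrow> take n xs \<le> take n (ys :: 'b::linorder list)"
proof (induction xs arbitrary: ys n)
  case (Cons a xs)
  then show ?case by (cases ys; cases n) auto
qed simp

lemma card_Domain_add_le_card:
  assumes "finite R" and "A \<subseteq> Domain R" and "\<And>a. a \<in> A \<Longrightarrow> s \<le> card (R `` {a})"
  shows "card (Domain R) + card A * (s - 1) \<le> card R"
proof -
  let ?h = "\<lambda>a. card (R `` {a})"
  have fin: "finite (Domain R)" "finite A" "\<And>a. finite (R `` {a})"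
    using assms(1) finite_subset[OF assms(2)] by (auto simp: finite_Domain finite_Image)
  have pos: "1 \<le> ?h a" if "a \<in> Domain R" for a
    using that fin(3)[of a] by (auto simp: Suc_le_eq card_gt_0_iff)
  have "card R = card (SIGMA a:Domain R. R `` {a})" by (rule arg_cong[of _ _ card]) auto
  also have "\<dots> = (\<Sum>a\<in>Domain R. ?h a)" using fin by simp
  also have "\<dots> = (\<Sum>a\<in>Domain R. 1 + (?h a - 1))"
    using pos by (intro sum.cong) fastforce+
  also have "\<dots> = card (Domain R) + (\<Sum>a\<in>Domain R. ?h a - 1)"
    by (simp only: sum.distrib card_eq_sum)
  finally have "card R = card (Domain R) + (\<Sum>a\<in>Domain R. ?h a - 1)" .
  moreover have "card A * (s - 1) \<le> (\<Sum>a\<in>A. ?h a - 1)"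
    using sum_mono[of A "\<lambda>_. s - 1" "\<lambda>a. ?h a - 1"] assms(3) by fastforce
  moreover have "(\<Sum>a\<in>A. ?h a - 1) \<le> (\<Sum>a\<in>Domain R. ?h a - 1)"
    by (rule sum_mono2[OF fin(1) assms(2)]) simp
  ultimately show ?thesis by linarith
qed

lemma cyc_window_Suc:
  "cyc_window u i (Suc k) = u ! (i mod length u) # cyc_window u (Suc i) k"
  unfolding cyc_window_def by (simp add: upt_conv_Cons map_Suc_upt[symmetric] del: upt_Suc)

lemma cyc_window_rotate:
  "u \<noteq> [] \<Longrightarrow> cyc_window (rotate j u) i k = cyc_window u (j + i) k"
  unfolding cyc_window_def by (simp add: nth_rotate mod_add_right_eq add.assoc)

lemma cyc_window_mod: "cyc_window u (i mod length u) k = cyc_window u i k"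
  unfolding cyc_window_def by (simp add: mod_add_left_eq)

lemma de_bruijn_window_rotate:
  assumes "de_bruijn S k u" and "length x = k" and "set x \<subseteq> S"
  shows "\<exists>i<length u. cyc_window (rotate j u) i k = x"
proof -
  obtain i0 where "i0 < length u" and i0: "cyc_window u i0 k = x"
    using assms unfolding de_bruijn_def by blast
  then have "u \<noteq> []" by auto
  define m where "m = length u"
  define i where "i = (m - j mod m + i0) mod m"
  have "0 < m" using \<open>u \<noteq> []\<close> by (simp add: m_def)
  have "j + (m - j mod m + i0) = (i0 + m) + m * (j div m)"
    using mod_le_divisor[OF \<open>0 < m\<close>, of j] mult_div_mod_eq[of m j] by linarith
  then have "(j + i) mod length u = i0 mod length u"
    unfolding i_def m_def[symmetric] by (metis mod_add_right_eq mod_mult_self2 mod_add_self2)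
  then have "cyc_window (rotate j u) i k = x"
    using \<open>u \<noteq> []\<close> i0 by (metis cyc_window_mod cyc_window_rotate)
  moreover have "i < length u" using \<open>u \<noteq> []\<close> by (simp add: i_def m_def)
  ultimately show ?thesis by blast
qed

lemma take_drop_append_take_eq_cyc_window:
  assumes "i \<le> length u" and "k \<le> length u"
  shows "take k (drop i (u @ take k u)) = cyc_window u i k"
proof (rule nth_equalityI)
  show "length (take k (drop i (u @ take k u))) = length (cyc_window u i k)"
    using assms by (simp add: cyc_window_def)
  fix t assume "t < length (take k (drop i (u @ take k u)))"
  then have t: "t < k" using assms by simp
  show "take k (drop i (u @ take k u)) ! t = cyc_window u i k ! t"
  proof (cases "i + t < length u")
    case False
    then have "(i + t) mod length u = i + t - length u"
      using assms t by (simp add: mod_if le_mod_geq)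
    then show ?thesis using assms t False by (auto simp: cyc_window_def nth_append add.commute)
  qed (use t in \<open>auto simp: cyc_window_def nth_append\<close>)
qed

lemma rotate_with_end_context:
  assumes "cyc_window u i (Suc n) = c # x" and "i < length u" and "n \<le> length u"
  shows "take n (rotate (Suc i) (with_end (u @ take n u))) = map Some x"
    and "last (rotate (Suc i) (with_end (u @ take n u))) = Some c"
proof -
  define w where "w = u @ take n u"
  have lw: "length w = length u + n" using assms(3) by (simp add: w_def)
  have rot: "rotate (Suc i) (with_end w) =
      map Some (drop (Suc i) w) @ [None] @ map Some (take (Suc i) w)"
    using assms(2) lw by (simp add: with_end_def rotate_drop_take drop_map take_map)
  have "c = u ! i" and "x = cyc_window u (Suc i) n"
    using assms(1,2) by (simp_all add: cyc_window_Suc)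
  then show "take n (rotate (Suc i) (with_end (u @ take n u))) = map Some x"
    using assms(2,3) lw unfolding w_def[symmetric] rot
    by (simp add: take_map take_drop_append_take_eq_cyc_window[symmetric] w_def)
  show "last (rotate (Suc i) (with_end (u @ take n u))) = Some c"
    using assms(2) lw \<open>c = u ! i\<close> unfolding w_def[symmetric] rot
    by (simp add: last_map take_Suc_conv_app_nth w_def nth_append)
qed

lemma card_context_pairs_le_runs_bwt:
  fixes v :: "'b::linorder list"
  assumes "v \<noteq> []"
  shows "card (context_pairs n v) + 1 \<le> runs (bwt v) + card (Domain (context_pairs n v))"
proof -
  define L where "L = sort (map (\<lambda>i. rotate i v) [0..<length v])"
  have "length L = length v" by (simp add: L_def)
  then have L: "L \<noteq> []" using assms by auto
  have set_L: "set L = rotations v" by (simp add: L_def rotations_def lessThan_atLeast0)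
  have bwt_L: "bwt v = map last L" by (simp add: L_def bwt_def)
  have "sorted (map (take n) L)"
    by (rule sorted_map_mono) (auto simp: L_def mono_on_def take_lexorder_mono)
  then have "runs (map (take n) L) = card (Domain (context_pairs n v))"
    by (simp add: runs_sorted set_L Domain_context_pairs)
  moreover have "card (context_pairs n v) \<le> runs (map (\<lambda>r. (take n r, last r)) L)"
    using card_set_le_runs[of "map (\<lambda>r. (take n r, last r)) L"]
    by (simp add: set_L context_pairs_def)
  ultimately show ?thesis
    unfolding bwt_L using runs_map_pair_le[OF L, of "take n" last] by linarith
qed

lemma de_bruijn_context_pair:
  assumes "de_bruijn S k D" and "k \<ge> 1" and "k - 1 \<le> length D"
    and "set x \<subseteq> S" and "length x = k - 1" and "c \<in> S"
  shows "(map Some x, Some c)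
    \<in> context_pairs (k - 1) (with_end (rotate j D @ take (k - 1) (rotate j D)))"
proof -
  let ?U = "rotate j D"
  obtain i where i: "i < length ?U" "cyc_window ?U i (Suc (k - 1)) = c # x"
    using de_bruijn_window_rotate[OF assms(1), of "c # x"] assms(2,4-6) by auto
  have "length (with_end (?U @ take (k - 1) ?U)) = length D + k"
    using assms(2,3) by (simp add: with_end_def)
  then have "rotate (Suc i) (with_end (?U @ take (k - 1) ?U))
      \<in> rotations (with_end (?U @ take (k - 1) ?U))"
    unfolding rotations_def using i(1) assms(2) by (intro rev_image_eqI[of "Suc i"]) auto
  then show ?thesis
    using rotate_with_end_context[OF i(2,1)] assms(3)
    unfolding context_pairs_def by force
qed

lemma de_bruijn_card_context_pairs:
  fixes j :: nat
  assumes "finite S" and "S \<noteq> {}" and "de_bruijn S k D" and "k \<ge> 1" and "k - 1 \<le> length D"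
  defines "P \<equiv> context_pairs (k - 1) (with_end (rotate j D @ take (k - 1) (rotate j D)))"
  shows "card (Domain P) + card S ^ (k - 1) * (card S - 1) \<le> card P"
proof -
  define A where "A = map Some ` {x. set x \<subseteq> S \<and> length x = k - 1}"
  have fiber: "Some ` S \<subseteq> P `` {a}" if "a \<in> A" for a
    using that de_bruijn_context_pair[OF assms(3-5)] by (auto simp: A_def P_def)
  have "A \<subseteq> Domain P" using fiber assms(2) by blast
  moreover have "card S \<le> card (P `` {a})" if "a \<in> A" for a
    using fiber[OF that] card_mono[of "P `` {a}" "Some ` S"]
    by (simp add: P_def finite_context_pairs finite_Image card_image)
  ultimately have "card (Domain P) + card A * (card S - 1) \<le> card P"
    by (intro card_Domain_add_le_card) (simp_all add: P_def finite_context_pairs)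
  moreover have "card A = card S ^ (k - 1)"
    using assms(1) by (simp add: A_def card_image card_lists_length_eq inj_on_def)
  ultimately show ?thesis by simp
qed

theorem lemma6:
  fixes S :: "'a::linorder set" and \<sigma> k j :: nat and D U :: "'a list"
  assumes "finite S" and "card S = \<sigma>" and "\<sigma> \<ge> 2" and "k \<ge> 1"
    and "de_bruijn S k D" and "U = rotate j D"
  shows "runs (bwt (with_end (U @ take (k - 1) U))) \<ge> \<sigma> ^ (k - 1) * (\<sigma> - 1) + 1"
proof -
  let ?P = "context_pairs (k - 1) (with_end (U @ take (k - 1) U))"
  have "k < 2 ^ k" by (rule less_exp)
  also have "\<dots> \<le> \<sigma> ^ k" using assms(3) by (simp add: power_mono)
  also have "\<dots> = length D" using assms(2,5) by (simp add: de_bruijn_def)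
  finally have "k - 1 \<le> length D" by simp
  moreover have "S \<noteq> {}" using assms(2,3) by auto
  ultimately have "card (Domain ?P) + \<sigma> ^ (k - 1) * (\<sigma> - 1) \<le> card ?P"
    using de_bruijn_card_context_pairs[OF assms(1) _ assms(5,4)] assms(2,6) by blast
  moreover have "card ?P + 1 \<le> runs (bwt (with_end (U @ take (k - 1) U))) + card (Domain ?P)"
    by (rule card_context_pairs_le_runs_bwt) (simp add: with_end_def)
  ultimately show ?thesis by linarith
qed

end
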